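(* Let $p \in (0,\frac{1}{2})$ be a constant. No (possibly randomized) sorting algorithm can achieve, on a random instance with $n$ elements, an expected total dislocation of $o(n)$.
   Context: Setting: the elements are $S=\{1,\dots,n\}$ with the natural order. A random instance consists of an input permutation of $S$ chosen uniformly at random together with comparison outcomes: for each pair $i<j$ independently, the comparison reports the wrong order with probability exactly $p$ and the correct order otherwise; outcomes are persistent (repeated comparisons of the same pair return the same outcome). The algorithm accesses elements only via these comparisons and outputs a permutation of $S$. The dislocation of an element is the absolute difference between its position in the output and its true rank; the total dislocation is the sum over all elements. *)

theory Defs
  imports "HOL-Probability.Probability" "HOL-Combinatorics.Permutations" "HOL-Library.Landau_Symbols"
begin

text \<open>Elements are identified with their true ranks 0..n-1 (the shift from 1..n is
irrelevant for dislocations). Positions in the input are 0..n-1.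
An input permutation \<sigma> maps input position a to the element stored there.
A set F of pairs (i,j), i<j<n, of elements lists the comparisons that report the wrong order.\<close>

definition pairs :: "nat \<Rightarrow> (nat \<times> nat) set" where
  "pairs n = {(i, j). i < j \<and> j < n}"

text \<open>Observed (persistent) comparison outcomes, indexed by input positions:
obs n \<sigma> F a b holds iff the comparison reports the element at position a as smaller
than the element at position b.\<close>
definition obs :: "nat \<Rightarrow> (nat \<Rightarrow> nat) \<Rightarrow> (nat \<times> nat) set \<Rightarrow> nat \<Rightarrow> nat \<Rightarrow> bool" where
  "obs n \<sigma> F a b \<longleftrightarrow> a < n \<and> b < n \<and> a \<noteq> b \<and>
     ((\<sigma> a < \<sigma> b) \<noteq> ((min (\<sigma> a) (\<sigma> b), max (\<sigma> a) (\<sigma> b)) \<in> F))"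

definition err_prob :: "real \<Rightarrow> nat \<Rightarrow> (nat \<times> nat) set \<Rightarrow> real" where
  "err_prob p n F = p ^ card F * (1 - p) ^ (card (pairs n) - card F)"

text \<open>Total dislocation: the output \<pi> maps input position a to its output position;
the element at a is \<sigma> a, whose true rank is \<sigma> a.\<close>
definition total_disl :: "nat \<Rightarrow> (nat \<Rightarrow> nat) \<Rightarrow> (nat \<Rightarrow> nat) \<Rightarrow> real" where
  "total_disl n \<sigma> \<pi> = (\<Sum>a<n. \<bar>real (\<pi> a) - real (\<sigma> a)\<bar>)"

text \<open>A (randomized) algorithm A: for each n, given the comparison outcomes on input
positions, a distribution of output permutations of positions.\<close>
definition exp_disl :: "real \<Rightarrow> (nat \<Rightarrow> (nat \<Rightarrow> nat \<Rightarrow> bool) \<Rightarrow> (nat \<Rightarrow> nat) pmf) \<Rightarrow> nat \<Rightarrow> real" where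
  "exp_disl p A n =
     (\<Sum>\<sigma>\<in>{\<sigma>. \<sigma> permutes {..<n}}. \<Sum>F\<in>Pow (pairs n).
        (1 / fact n) * err_prob p n F *
        measure_pmf.expectation (A n (obs n \<sigma> F)) (total_disl n \<sigma>))"

definition valid_alg :: "(nat \<Rightarrow> (nat \<Rightarrow> nat \<Rightarrow> bool) \<Rightarrow> (nat \<Rightarrow> nat) pmf) \<Rightarrow> bool" where
  "valid_alg A \<longleftrightarrow> (\<forall>n c. set_pmf (A n c) \<subseteq> {\<pi>. \<pi> permutes {..<n}})"

end

theory Submission
  imports Defs
begin

text \<open>Exchange the elements of ranks \<open>v\<close> and \<open>v + 1\<close> in the input, toggle the error
status of their mutual comparison and let every other error follow its pair: the new instance
produces exactly the same observations, so the algorithm answers both alike. The element at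
the input position of \<open>v\<close> has rank \<open>v\<close> in one instance and \<open>v + 1\<close> in the other, so its
dislocations in the two instances add up to at least 1. When the comparison of \<open>v\<close> and
\<open>v + 1\<close> is erroneous, the companion instance is \<open>(1 - p) / p \<ge> 1\<close> times as likely, hence
these two elements have expected combined dislocation at least \<open>p\<close>. Summing over the
\<open>n - 1\<close> adjacent pairs counts every element at most twice, so the expected total dislocation
is at least \<open>p (n - 1) / 2\<close>.\<close>

lemma sum_split_involution:
  assumes "finite U" and "\<And>x. x \<in> U \<Longrightarrow> \<Phi> x \<in> U"
    and "\<And>x. x \<in> U \<Longrightarrow> \<Phi> (\<Phi> x) = x"
    and "\<And>x. x \<in> U \<Longrightarrow> P (\<Phi> x) \<longleftrightarrow> \<not> P x"
  shows "sum f U = (\<Sum>x | x \<in> U \<and> P x. f x + f (\<Phi> x))"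
proof -
  let ?U1 = "{x. x \<in> U \<and> P x}"
  have "bij_betw \<Phi> ?U1 (U - ?U1)"
    by (rule bij_betw_byWitness[where f' = \<Phi>]) (use assms in auto)
  then have "sum f (U - ?U1) = (\<Sum>x\<in>?U1. f (\<Phi> x))"
    by (simp add: sum.reindex_bij_betw)
  moreover have "sum f U = sum f (U - ?U1) + sum f ?U1"
    using assms(1) by (intro sum.subset_diff) auto
  ultimately show ?thesis
    by (simp add: sum.distrib add.commute)
qed

lemma weighted_pair_lower_bound:
  fixes p w1 w2 h1 h2 :: real
  assumes "0 < p" "p \<le> 1/2" "0 \<le> w1" "p * w2 = (1 - p) * w1" "0 \<le> h2" "1 \<le> h1 + h2"
  shows "p * (w1 + w2) \<le> w1 * h1 + w2 * h2"
proof -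
  have "p * w1 \<le> (1 - p) * w1"
    using assms(2,3) by (intro mult_right_mono) auto
  then have "p * w1 \<le> p * w2"
    using assms(4) by simp
  then have "w1 \<le> w2"
    using assms(1) by (simp add: mult_le_cancel_left_pos)
  have "p * (w1 + w2) = w1"
    using assms(4) by (simp add: algebra_simps)
  also have "\<dots> \<le> w1 * (h1 + h2)"
    using assms(3,6) by (simp add: mult_le_cancel_left1)
  also have "\<dots> \<le> w1 * h1 + w2 * h2"
    using \<open>w1 \<le> w2\<close> assms(5) by (simp add: distrib_left mult_right_mono)
  finally show ?thesis .
qed

lemma sum_adjacent_le:
  fixes f :: "nat \<Rightarrow> real"
  assumes "\<And>u. 0 \<le> f u"
  shows "(\<Sum>v<n - 1. f v + f (Suc v)) \<le> 2 * (\<Sum>u<n. f u)"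
proof (cases n)
  case 0
  then show ?thesis by simp
next
  case (Suc m)
  have "(\<Sum>v<m. f v) \<le> (\<Sum>u<n. f u)"
    using Suc assms by (intro sum_mono2) auto
  moreover have "(\<Sum>u<n. f u) = f 0 + (\<Sum>v<m. f (Suc v))"
    unfolding Suc by (rule sum.lessThan_Suc_shift)
  ultimately show ?thesis
    using Suc assms[of 0] by (simp add: sum.distrib)
qed

lemma sum_Pow_binomial_weights:
  fixes p :: "'a :: comm_ring_1"
  assumes "finite X"
  shows "(\<Sum>F\<in>Pow X. p ^ card F * (1 - p) ^ (card X - card F)) = 1"
proof -
  have "(\<Prod>x\<in>X. p + (1 - p)) = (\<Sum>F\<in>Pow X. (\<Prod>x\<in>F. p) * (\<Prod>x\<in>X - F. 1 - p))"
    by (rule prod_add[OF assms])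
  also have "\<dots> = (\<Sum>F\<in>Pow X. p ^ card F * (1 - p) ^ (card X - card F))"
    using assms by (intro sum.cong) (auto simp: card_Diff_subset finite_subset)
  finally show ?thesis
    by simp
qed

lemma finite_pairs: "finite (pairs n)"
  by (rule finite_subset[of _ "{..<n} \<times> {..<n}"]) (auto simp: pairs_def)

lemma sum_err_prob: "(\<Sum>F\<in>Pow (pairs n). err_prob p n F) = 1"
  unfolding err_prob_def by (rule sum_Pow_binomial_weights[OF finite_pairs])

lemma err_prob_nonneg: "0 \<le> p \<Longrightarrow> p \<le> 1 \<Longrightarrow> 0 \<le> err_prob p n F"
  unfolding err_prob_def by simp

abbreviation adj_swap :: "nat \<Rightarrow> nat \<Rightarrow> nat" where
  "adj_swap v \<equiv> Transposition.transpose v (Suc v)"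

definition relabel_pair :: "nat \<Rightarrow> nat \<times> nat \<Rightarrow> nat \<times> nat" where
  "relabel_pair v m =
     (min (adj_swap v (fst m)) (adj_swap v (snd m)), max (adj_swap v (fst m)) (adj_swap v (snd m)))"

text \<open>The error pattern under which exchanging \<open>v\<close> and \<open>v + 1\<close> leaves all observations
unchanged.\<close>

definition swap_errors :: "nat \<Rightarrow> (nat \<times> nat) set \<Rightarrow> (nat \<times> nat) set" where
  "swap_errors v F = sym_diff (relabel_pair v ` F) {(v, Suc v)}"

lemma adj_swap_permutes: "Suc v < n \<Longrightarrow> adj_swap v permutes {..<n}"
  by (intro permutes_swap_id) auto

lemma adj_swap_less_iff:
  "x \<noteq> y \<Longrightarrow> adj_swap v x < adj_swap v y \<longleftrightarrow> (x < y) \<noteq> ((min x y, max x y) = (v, Suc v))"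
  unfolding Transposition.transpose_def by (auto simp: min_def max_def)

lemma relabel_pair_min_max:
  "relabel_pair v (min x y, max x y) =
     (min (adj_swap v x) (adj_swap v y), max (adj_swap v x) (adj_swap v y))"
  unfolding relabel_pair_def by (cases "x \<le> y") (auto simp: min_def max_def)

lemma relabel_pair_adj [simp]: "relabel_pair v (v, Suc v) = (v, Suc v)"
  unfolding relabel_pair_def by simp

lemma relabel_pair_pairs: "Suc v < n \<Longrightarrow> m \<in> pairs n \<Longrightarrow> relabel_pair v m \<in> pairs n"
  unfolding relabel_pair_def pairs_def Transposition.transpose_def
  by (auto simp: min_def max_def)

lemma relabel_pair_involutive: "m \<in> pairs n \<Longrightarrow> relabel_pair v (relabel_pair v m) = m"
  unfolding relabel_pair_def pairs_def Transposition.transpose_def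
  by (auto simp: min_def max_def)

lemma relabel_pair_eq_adj_iff:
  "m \<in> pairs n \<Longrightarrow> relabel_pair v m = (v, Suc v) \<longleftrightarrow> m = (v, Suc v)"
  by (metis relabel_pair_adj relabel_pair_involutive)

lemma mem_swap_errors_iff:
  assumes "F \<subseteq> pairs n" "m \<in> pairs n"
  shows "m \<in> swap_errors v F \<longleftrightarrow> (relabel_pair v m \<in> F) \<noteq> (m = (v, Suc v))"
proof -
  have "m \<in> relabel_pair v ` F \<longleftrightarrow> relabel_pair v m \<in> F"
    using assms by (force simp: relabel_pair_involutive intro: rev_image_eqI)
  then show ?thesis
    unfolding swap_errors_def by auto
qed

lemma swap_errors_subset:
  assumes "Suc v < n" "F \<subseteq> pairs n"
  shows "swap_errors v F \<subseteq> pairs n"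
proof -
  have "relabel_pair v ` F \<subseteq> pairs n"
    using assms relabel_pair_pairs by blast
  moreover have "(v, Suc v) \<in> pairs n"
    using assms(1) by (simp add: pairs_def)
  ultimately show ?thesis
    unfolding swap_errors_def by blast
qed

lemma adj_mem_swap_errors_iff:
  "Suc v < n \<Longrightarrow> F \<subseteq> pairs n \<Longrightarrow> (v, Suc v) \<in> swap_errors v F \<longleftrightarrow> (v, Suc v) \<notin> F"
  by (subst mem_swap_errors_iff) (auto simp: pairs_def)

lemma swap_errors_involutive:
  assumes "Suc v < n" "F \<subseteq> pairs n"
  shows "swap_errors v (swap_errors v F) = F"
proof (rule set_eqI)
  fix m
  show "m \<in> swap_errors v (swap_errors v F) \<longleftrightarrow> m \<in> F"
  proof (cases "m \<in> pairs n")
    case True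
    have "relabel_pair v m \<in> pairs n"
      using assms(1) True by (rule relabel_pair_pairs)
    then have "relabel_pair v m \<in> swap_errors v F \<longleftrightarrow> (m \<in> F) \<noteq> (m = (v, Suc v))"
      using assms(2) True
      by (simp add: mem_swap_errors_iff relabel_pair_involutive relabel_pair_eq_adj_iff)
    then show ?thesis
      using True swap_errors_subset[OF assms] by (auto simp: mem_swap_errors_iff)
  next
    case False
    then show ?thesis
      using assms swap_errors_subset by blast
  qed
qed

lemma card_swap_errors:
  assumes "F \<subseteq> pairs n" "(v, Suc v) \<in> F"
  shows "card (swap_errors v F) = card F - 1"
proof -
  have "inj_on (relabel_pair v) F"
    using assms(1) by (metis inj_on_inverseI relabel_pair_involutive subsetD)
  moreover have "(v, Suc v) \<in> relabel_pair v ` F"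
    using assms(2) by (metis image_eqI relabel_pair_adj)
  ultimately show ?thesis
    unfolding swap_errors_def by (simp add: card_image)
qed

lemma err_prob_swap_errors:
  assumes "F \<subseteq> pairs n" "(v, Suc v) \<in> F"
  shows "p * err_prob p n (swap_errors v F) = (1 - p) * err_prob p n F"
proof -
  have "card F \<le> card (pairs n)" "card F \<noteq> 0"
    using assms finite_pairs by (auto simp: card_mono finite_subset)
  then obtain k where k: "card F = Suc k" "card (pairs n) - k = Suc (card (pairs n) - card F)"
    by (metis Suc_diff_le Suc_le_eq diff_Suc_Suc not0_implies_Suc)
  then show ?thesis
    unfolding err_prob_def card_swap_errors[OF assms] by (simp add: mult_ac)
qed

lemma obs_swap_errors:
  assumes \<sigma>: "\<sigma> permutes {..<n}" and "Suc v < n" and F: "F \<subseteq> pairs n"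
  shows "obs n (adj_swap v \<circ> \<sigma>) (swap_errors v F) = obs n \<sigma> F"
proof (intro ext)
  fix a b
  show "obs n (adj_swap v \<circ> \<sigma>) (swap_errors v F) a b = obs n \<sigma> F a b"
  proof (cases "a < n \<and> b < n \<and> a \<noteq> b")
    case False
    then show ?thesis unfolding obs_def by auto
  next
    case True
    define x y where "x = \<sigma> a" and "y = \<sigma> b"
    have "x \<noteq> y" "x < n" "y < n"
      using True permutes_inj[OF \<sigma>] permutes_in_image[OF \<sigma>]
      unfolding x_def y_def by (auto dest: injD)
    define m where "m = (min x y, max x y)"
    have m: "m \<in> pairs n"
      using \<open>x \<noteq> y\<close> \<open>x < n\<close> \<open>y < n\<close> unfolding m_def pairs_def by (auto simp: min_def max_def)
    have "obs n (adj_swap v \<circ> \<sigma>) (swap_errors v F) a b \<longleftrightarrow>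
        (adj_swap v x < adj_swap v y) \<noteq> (relabel_pair v m \<in> swap_errors v F)"
      using True unfolding obs_def relabel_pair_min_max m_def x_def y_def by simp
    also have "\<dots> \<longleftrightarrow> ((x < y) \<noteq> (m = (v, Suc v))) \<noteq> ((m \<in> F) \<noteq> (m = (v, Suc v)))"
      using adj_swap_less_iff[OF \<open>x \<noteq> y\<close>, of v] m F relabel_pair_pairs[OF \<open>Suc v < n\<close> m]
      by (simp add: m_def[symmetric] mem_swap_errors_iff relabel_pair_involutive relabel_pair_eq_adj_iff)
    also have "\<dots> \<longleftrightarrow> obs n \<sigma> F a b"
      using True unfolding obs_def m_def x_def y_def by auto
    finally show ?thesis .
  qed
qed

definition instances :: "nat \<Rightarrow> ((nat \<Rightarrow> nat) \<times> (nat \<times> nat) set) set" where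
  "instances n = {\<sigma>. \<sigma> permutes {..<n}} \<times> Pow (pairs n)"

definition swap_instance ::
  "nat \<Rightarrow> (nat \<Rightarrow> nat) \<times> (nat \<times> nat) set \<Rightarrow> (nat \<Rightarrow> nat) \<times> (nat \<times> nat) set" where
  "swap_instance v = (\<lambda>(\<sigma>, F). (adj_swap v \<circ> \<sigma>, swap_errors v F))"

lemma sum_instances_swap_split:
  assumes v: "Suc v < n"
  shows "sum f (instances n) =
    (\<Sum>x | x \<in> instances n \<and> (v, Suc v) \<in> snd x. f x + f (swap_instance v x))"
proof (rule sum_split_involution)
  show "finite (instances n)"
    by (simp add: instances_def finite_pairs finite_permutations)
  fix x
  assume x: "x \<in> instances n"
  then obtain \<sigma> F where x_eq: "x = (\<sigma>, F)" and \<sigma>: "\<sigma> permutes {..<n}" and F: "F \<subseteq> pairs n"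
    by (auto simp: instances_def)
  show "swap_instance v x \<in> instances n"
    using permutes_compose[OF \<sigma> adj_swap_permutes[OF v]] swap_errors_subset[OF v F]
    by (simp add: instances_def swap_instance_def x_eq)
  show "swap_instance v (swap_instance v x) = x"
    using swap_errors_involutive[OF v F] by (simp add: swap_instance_def x_eq o_assoc)
  show "(v, Suc v) \<in> snd (swap_instance v x) \<longleftrightarrow> (v, Suc v) \<notin> snd x"
    using adj_mem_swap_errors_iff[OF v F] by (simp add: swap_instance_def x_eq)
qed

definition elem_disl :: "(nat \<Rightarrow> nat) \<Rightarrow> (nat \<Rightarrow> nat) \<Rightarrow> nat \<Rightarrow> real" where
  "elem_disl \<sigma> \<pi> u = \<bar>real (\<pi> (inv \<sigma> u)) - real u\<bar>"

lemma total_disl_eq_sum_elem_disl: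
  assumes "\<sigma> permutes {..<n}"
  shows "total_disl n \<sigma> \<pi> = (\<Sum>u<n. elem_disl \<sigma> \<pi> u)"
proof -
  have "(\<Sum>a<n. elem_disl \<sigma> \<pi> (\<sigma> a)) = (\<Sum>u<n. elem_disl \<sigma> \<pi> u)"
    using permutes_imp_bij[OF assms] by (rule sum.reindex_bij_betw)
  then show ?thesis
    unfolding total_disl_def elem_disl_def by (simp add: permutes_inverses(2)[OF assms])
qed

lemma elem_disl_adj_swap:
  assumes \<sigma>: "\<sigma> permutes {..<n}" and "Suc v < n"
  shows "1 \<le> elem_disl \<sigma> \<pi> v + elem_disl (adj_swap v \<circ> \<sigma>) \<pi> (Suc v)"
proof -
  have "adj_swap v \<circ> \<sigma> permutes {..<n}"
    using \<sigma> adj_swap_permutes[OF assms(2)] by (rule permutes_compose)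
  then have "inv (adj_swap v \<circ> \<sigma>) (Suc v) = inv \<sigma> v"
    by (simp add: permutes_inv_eq permutes_inverses(1)[OF \<sigma>])
  then show ?thesis
    unfolding elem_disl_def by simp
qed

definition instance_exp ::
  "real \<Rightarrow> (nat \<Rightarrow> (nat \<Rightarrow> nat \<Rightarrow> bool) \<Rightarrow> (nat \<Rightarrow> nat) pmf) \<Rightarrow> nat
     \<Rightarrow> ((nat \<Rightarrow> nat) \<Rightarrow> (nat \<Rightarrow> nat) \<Rightarrow> real) \<Rightarrow> real" where
  "instance_exp p A n h =
     (\<Sum>\<sigma>\<in>{\<sigma>. \<sigma> permutes {..<n}}. \<Sum>F\<in>Pow (pairs n).
        (1 / fact n) * err_prob p n F * measure_pmf.expectation (A n (obs n \<sigma> F)) (h \<sigma>))"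

lemma exp_disl_eq_instance_exp: "exp_disl p A n = instance_exp p A n (total_disl n)"
  unfolding exp_disl_def instance_exp_def ..

lemma integrable_valid_alg:
  fixes f :: "(nat \<Rightarrow> nat) \<Rightarrow> real"
  assumes "valid_alg A"
  shows "integrable (measure_pmf (A n c)) f"
proof -
  have "set_pmf (A n c) \<subseteq> {\<pi>. \<pi> permutes {..<n}}"
    using assms unfolding valid_alg_def by blast
  then show ?thesis
    by (intro integrable_measure_pmf_finite finite_subset[OF _ finite_permutations]) auto
qed

lemma instance_exp_sum:
  assumes "valid_alg A" "finite V"
  shows "instance_exp p A n (\<lambda>\<sigma> \<pi>. \<Sum>v\<in>V. h v \<sigma> \<pi>) = (\<Sum>v\<in>V. instance_exp p A n (h v))"
  unfolding instance_exp_def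
  by (simp add: integral_sum integrable_valid_alg[OF assms(1)] sum_distrib_left
      sum.swap[where A = V])

lemma instance_exp_mono:
  assumes "valid_alg A" "0 \<le> p" "p \<le> 1" "\<And>\<sigma> \<pi>. h \<sigma> \<pi> \<le> g \<sigma> \<pi>"
  shows "instance_exp p A n h \<le> instance_exp p A n g"
  unfolding instance_exp_def
  using assms err_prob_nonneg[OF assms(2,3)]
  by (intro sum_mono mult_left_mono integral_mono integrable_valid_alg) auto

lemma instance_exp_cmult: "instance_exp p A n (\<lambda>\<sigma> \<pi>. c * h \<sigma> \<pi>) = c * instance_exp p A n h"
  unfolding instance_exp_def by (simp add: sum_distrib_left mult_ac)

lemma instance_exp_ge_error_prob:
  assumes A: "valid_alg A" and p: "0 < p" "p \<le> 1/2" and v: "Suc v < n"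
    and h_nonneg: "\<And>\<sigma> \<pi>. 0 \<le> h \<sigma> \<pi>"
    and h_swap: "\<And>\<sigma> \<pi>. \<sigma> permutes {..<n} \<Longrightarrow> 1 \<le> h \<sigma> \<pi> + h (adj_swap v \<circ> \<sigma>) \<pi>"
  shows "p \<le> instance_exp p A n h"
proof -
  define w where "w = (\<lambda>(\<sigma> :: nat \<Rightarrow> nat, F). 1 / fact n * err_prob p n F)"
  define H where "H = (\<lambda>(\<sigma>, F). measure_pmf.expectation (A n (obs n \<sigma> F)) (h \<sigma>))"
  let ?erroneous = "\<lambda>x. x \<in> instances n \<and> (v, Suc v) \<in> snd x"
  have pair_bound:
    "p * (w x + w (swap_instance v x)) \<le> w x * H x + w (swap_instance v x) * H (swap_instance v x)"
    if err_x: "?erroneous x" for x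
  proof -
    obtain \<sigma> F where x: "x = (\<sigma>, F)" and \<sigma>: "\<sigma> permutes {..<n}" and F: "F \<subseteq> pairs n"
      using err_x by (auto simp: instances_def)
    define M where "M = A n (obs n \<sigma> F)"
    have H_swap: "H (swap_instance v x) = measure_pmf.expectation M (h (adj_swap v \<circ> \<sigma>))"
      by (simp add: H_def swap_instance_def x M_def obs_swap_errors[OF \<sigma> v F])
    have "1 \<le> measure_pmf.expectation M (\<lambda>\<pi>. h \<sigma> \<pi> + h (adj_swap v \<circ> \<sigma>) \<pi>)"
      using h_swap[OF \<sigma>] unfolding M_def
      by (intro measure_pmf.integral_ge_const integrable_valid_alg[OF A]) auto
    then have "1 \<le> H x + H (swap_instance v x)"
      using integrable_valid_alg[OF A] by (simp add: H_swap) (simp add: H_def x M_def)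
    moreover have "p * w (swap_instance v x) = (1 - p) * w x"
      using err_prob_swap_errors[OF F] err_x by (simp add: w_def swap_instance_def x)
    moreover have "0 \<le> w x" "0 \<le> H (swap_instance v x)"
      using p err_prob_nonneg[of p] h_nonneg by (auto simp: w_def H_def swap_instance_def x)
    ultimately show ?thesis
      using p by (intro weighted_pair_lower_bound) auto
  qed
  have "sum w (instances n) = 1"
    using sum_err_prob[of p n]
    by (simp add: instances_def w_def sum.cartesian_product[symmetric] card_permutations
        sum_divide_distrib[symmetric])
  then have "p = p * sum w (instances n)"
    by simp
  also have "\<dots> = (\<Sum>x | ?erroneous x. p * (w x + w (swap_instance v x)))"
    by (simp add: sum_instances_swap_split[OF v] sum_distrib_left)
  also have "\<dots> \<le> (\<Sum>x | ?erroneous x. w x * H x + w (swap_instance v x) * H (swap_instance v x))"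
    using pair_bound by (intro sum_mono) auto
  also have "\<dots> = (\<Sum>x\<in>instances n. w x * H x)"
    by (simp add: sum_instances_swap_split[OF v])
  also have "\<dots> = instance_exp p A n h"
    by (simp add: instances_def w_def H_def instance_exp_def sum.cartesian_product split_def)
  finally show ?thesis .
qed

lemma exp_disl_lower_bound:
  assumes A: "valid_alg A" and p: "0 < p" "p \<le> 1/2"
  shows "p * real (n - 1) \<le> 2 * exp_disl p A n"
proof -
  let ?adj_disl = "\<lambda>v \<sigma> \<pi>. elem_disl \<sigma> \<pi> v + elem_disl \<sigma> \<pi> (Suc v)"
  have "p * real (n - 1) = (\<Sum>v<n - 1. p)"
    by simp
  also have "\<dots> \<le> (\<Sum>v<n - 1. instance_exp p A n (?adj_disl v))"
  proof (intro sum_mono instance_exp_ge_error_prob[OF A p])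
    fix v \<sigma> \<pi>
    assume "v \<in> {..<n - 1}" and \<sigma>: "\<sigma> permutes {..<n}"
    then have "Suc v < n"
      by simp
    have "adj_swap v \<circ> \<sigma> permutes {..<n}"
      using \<sigma> adj_swap_permutes[OF \<open>Suc v < n\<close>] by (rule permutes_compose)
    then show "1 \<le> ?adj_disl v \<sigma> \<pi> + ?adj_disl v (adj_swap v \<circ> \<sigma>) \<pi>"
      using elem_disl_adj_swap[OF \<sigma> \<open>Suc v < n\<close>, of \<pi>] by (simp add: elem_disl_def)
  qed (auto simp: elem_disl_def)
  also have "\<dots> = instance_exp p A n (\<lambda>\<sigma> \<pi>. \<Sum>v<n - 1. ?adj_disl v \<sigma> \<pi>)"
    by (rule instance_exp_sum[symmetric, OF A]) simp
  also have "\<dots> \<le> instance_exp p A n (\<lambda>\<sigma> \<pi>. 2 * (\<Sum>u<n. elem_disl \<sigma> \<pi> u))"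
    using p by (intro instance_exp_mono[OF A] sum_adjacent_le) (auto simp: elem_disl_def)
  also have "\<dots> = 2 * exp_disl p A n"
  proof -
    have "total_disl n \<sigma> = (\<lambda>\<pi>. \<Sum>u<n. elem_disl \<sigma> \<pi> u)" if "\<sigma> permutes {..<n}" for \<sigma>
      using total_disl_eq_sum_elem_disl[OF that] by auto
    then show ?thesis
      unfolding instance_exp_cmult exp_disl_eq_instance_exp instance_exp_def
      by (auto intro!: sum.cong)
  qed
  finally show ?thesis .
qed

lemma not_smallo_real_of_linear_lower_bound:
  fixes f :: "nat \<Rightarrow> real"
  assumes "0 < c" and "\<And>n. c * real n - d \<le> f n"
  shows "f \<notin> o[at_top](\<lambda>n. real n)"
proof
  assume "f \<in> o[at_top](\<lambda>n. real n)"
  then have "eventually (\<lambda>n. norm (f n) \<le> c / 2 * norm (real n)) at_top"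
    using assms(1) by (intro landau_o.smallD) auto
  moreover have "eventually (\<lambda>n. real n > 2 * d / c) at_top"
    by (rule eventually_gt_at_top[THEN eventually_mono, of "nat (ceiling (2 * d / c)) + 1"])
      linarith
  ultimately have "eventually (\<lambda>n. norm (f n) \<le> c / 2 * norm (real n) \<and> real n > 2 * d / c) at_top"
    by (rule eventually_conj)
  then obtain n where "norm (f n) \<le> c / 2 * norm (real n)" and "real n > 2 * d / c"
    using eventually_happens'[OF sequentially_bot] by blast
  moreover have "c * real n - d \<le> f n"
    by (rule assms(2))
  ultimately show False
    using assms(1) by (simp add: field_simps)
qed

theorem theorem6p3:
  fixes p :: real and A :: "nat \<Rightarrow> (nat \<Rightarrow> nat \<Rightarrow> bool) \<Rightarrow> (nat \<Rightarrow> nat) pmf"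
  assumes "0 < p" and "p < 1/2"
    and "valid_alg A"
  shows "(\<lambda>n. exp_disl p A n) \<notin> o[at_top](\<lambda>n. real n)"
proof (rule not_smallo_real_of_linear_lower_bound)
  show "0 < p / 2"
    using assms(1) by simp
  fix n
  have "p * real (n - 1) \<le> 2 * exp_disl p A n"
    using exp_disl_lower_bound[OF assms(3,1)] assms(2) by simp
  then show "p / 2 * real n - p / 2 \<le> exp_disl p A n"
    using assms(1) by (cases n) (auto simp: algebra_simps)
qed

end
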